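(* Let $\mathcal H$ be a hypergraph and let $m\ge l+1$ be integers with $l\ge 0$. Suppose the embedded homology satisfies $H_n(\mathcal H)=0$ for all $l\le n\le m$. Then for every $n$ with $l+1\le n\le m$: (i) $H_n(\Delta\mathcal H,\mathcal H)\cong H_n(\Delta\mathcal H)$; (ii) $H_n(\mathcal H,\delta\mathcal H)\cong H_{n-1}(\delta\mathcal H)$; (iii) there is a short exact sequence $$0\to H_n(\Delta\mathcal H)\to H_n(\Delta\mathcal H,\delta\mathcal H)\to H_{n-1}(\delta\mathcal H)\to 0,$$ where $H_n(\Delta\mathcal H,\delta\mathcal H)$ is the usual simplicial relative homology, isomorphic to the reduced homology $\tilde H_n(|\Delta\mathcal H|/|\delta\mathcal H|)$ of the quotient of geometric realizations. Consequently $0\to H_n(\Delta\mathcal H,\mathcal H)\to \tilde H_n(|\Delta\mathcal H|/|\delta\mathcal H|)\to H_n(\mathcal H,\delta\mathcal H)\to 0$ is exact.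
   Context: A hypergraph is a finite set $\mathcal H$ of nonempty finite subsets of a vertex set; elements are hyperedges, an $n$-hyperedge having $n+1$ vertices. The associated simplicial complex is $\Delta\mathcal H=\{\sigma\ne\emptyset:\sigma\subseteq\tau\text{ for some }\tau\in\mathcal H\}$ and the lower-associated simplicial complex is $\delta\mathcal H=\{\sigma\in\mathcal H:\ \text{every nonempty }\tau\subseteq\sigma\text{ lies in }\mathcal H\}$; thus $\delta\mathcal H\subseteq\mathcal H\subseteq\Delta\mathcal H$. Fix an abelian coefficient group $G$; $C_*(\Delta\mathcal H)$ is the simplicial chain complex with coefficients in $G$ and boundary $\partial$, $G(\mathcal H)_n$ the $G$-linear combinations of $n$-hyperedges, $\mathrm{Inf}_n(\mathcal H)=G(\mathcal H)_n\cap\partial_n^{-1}(G(\mathcal H)_{n-1})$. Embedded homology: $H_n(\mathcal H)=H_n(\mathrm{Inf}_*(\mathcal H))$; for $\mathcal A\subseteq\mathcal B$ relative embedded homology $H_n(\mathcal B,\mathcal A)=H_n(\mathrm{Inf}_*(\mathcal B)/\mathrm{Inf}_*(\mathcal A))$. For simplicial complexes these agree with ordinary simplicial (relative) homology with coefficients in $G$. *)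

theory Defs
  imports "HOL-Algebra.Exact_Sequence"
begin

text \<open>Simplices are finite nonempty sets of vertices; the vertex type is linearly
ordered, which fixes the orientation of every simplex (vertices listed increasingly).
An n-simplex has n+1 vertices. Chains with coefficients in an abelian group 'g are
finitely supported functions from vertex sets to 'g.\<close>

definition assoc_complex :: "'v set set \<Rightarrow> 'v set set" where
  "assoc_complex H = {\<sigma>. \<sigma> \<noteq> {} \<and> (\<exists>\<tau>\<in>H. \<sigma> \<subseteq> \<tau>)}"

definition lower_complex :: "'v set set \<Rightarrow> 'v set set" where
  "lower_complex H = {\<sigma>\<in>H. \<forall>\<tau>. \<tau> \<noteq> {} \<and> \<tau> \<subseteq> \<sigma> \<longrightarrow> \<tau> \<in> H}"

definition is_hypergraph :: "'v set set \<Rightarrow> bool" where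
  "is_hypergraph H \<longleftrightarrow> finite H \<and> (\<forall>\<sigma>\<in>H. finite \<sigma> \<and> \<sigma> \<noteq> {})"

definition chains :: "'v set set \<Rightarrow> nat \<Rightarrow> ('v set \<Rightarrow> 'g::ab_group_add) set" where
  "chains S n = {c. finite {\<sigma>. c \<sigma> \<noteq> 0} \<and> (\<forall>\<sigma>. c \<sigma> \<noteq> 0 \<longrightarrow> \<sigma> \<in> S \<and> card \<sigma> = Suc n)}"

text \<open>Simplicial boundary: the face of \<sigma> obtained by deleting its i-th vertex
(counting from 0 in increasing order) gets sign (-1)^i. Faces are nonempty
(the chain complex is not augmented).\<close>
definition bd :: "('v::linorder set \<Rightarrow> 'g::ab_group_add) \<Rightarrow> 'v set \<Rightarrow> 'g" where
  "bd c \<tau> = (if \<tau> = {} then 0 else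
     (\<Sum>v\<in>{v. v \<notin> \<tau> \<and> c (insert v \<tau>) \<noteq> 0}.
        (if even (card {u\<in>\<tau>. u < v}) then c (insert v \<tau>) else - c (insert v \<tau>))))"

definition Inf :: "'v::linorder set set \<Rightarrow> nat \<Rightarrow> ('v set \<Rightarrow> 'g::ab_group_add) set" where
  "Inf H n = {c \<in> chains H n. n = 0 \<or> bd c \<in> chains H (n - 1)}"

text \<open>Relative homology H_n(Inf(B)/Inf(A)) for A \<subseteq> B, via relative cycles modulo
relative boundaries (the standard description of the homology of a quotient complex).\<close>
definition rel_cycles :: "'v::linorder set set \<Rightarrow> 'v set set \<Rightarrow> nat \<Rightarrow> ('v set \<Rightarrow> 'g::ab_group_add) set" where
  "rel_cycles B A n = {c \<in> Inf B n. n = 0 \<or> bd c \<in> Inf A (n - 1)}"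

definition rel_bounds :: "'v::linorder set set \<Rightarrow> 'v set set \<Rightarrow> nat \<Rightarrow> ('v set \<Rightarrow> 'g::ab_group_add) set" where
  "rel_bounds B A n = {(\<lambda>\<sigma>. bd d \<sigma> + a \<sigma>) | d a. d \<in> Inf B (Suc n) \<and> a \<in> Inf A n}"

definition cycle_group :: "'v::linorder set set \<Rightarrow> 'v set set \<Rightarrow> nat \<Rightarrow> ('v set \<Rightarrow> 'g::ab_group_add) monoid" where
  "cycle_group B A n = \<lparr>carrier = rel_cycles B A n, mult = (\<lambda>x y \<sigma>. x \<sigma> + y \<sigma>), one = (\<lambda>\<sigma>. 0)\<rparr>"

definition rel_emb_homology :: "'v::linorder set set \<Rightarrow> 'v set set \<Rightarrow> nat \<Rightarrow> ('v set \<Rightarrow> 'g::ab_group_add) set monoid" where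
  "rel_emb_homology B A n = cycle_group B A n Mod rel_bounds B A n"

definition emb_homology :: "'v::linorder set set \<Rightarrow> nat \<Rightarrow> ('v set \<Rightarrow> 'g::ab_group_add) set monoid" where
  "emb_homology H n = rel_emb_homology H {} n"

end

theory Submission
  imports Defs "HOL-Library.Function_Algebras" "HOL-Algebra.Elementary_Groups"
begin

text \<open>Write L = \<delta>H \<subseteq> H \<subseteq> K = \<Delta>H; only these inclusions and the vanishing of
  H_n(H) and H_(n-1)(H) are used, and everything is checked on representatives.
  An n-cycle of K that bounds relative to H differs from a boundary by an n-cycle of H, which
  bounds in H; the boundary of a relative cycle of (K, H) is an (n-1)-cycle of H, hence the
  boundary of a chain d of H, and subtracting d gives an absolute cycle. So inclusion induces
  H_n(K) \<cong> H_n(K, H), and in the same way the boundary map induces H_n(H, L) \<cong> H_(n-1)(L).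
  Inclusion followed by the boundary map is the piece 0 \<rightarrow> H_n(K) \<rightarrow> H_n(K, L) \<rightarrow> H_(n-1)(L) \<rightarrow> 0
  of the long exact sequence of (K, L): the maps H_n(L) \<rightarrow> H_n(K) and H_(n-1)(L) \<rightarrow> H_(n-1)(K)
  vanish because cycles of L already bound in H. Replacing the outer terms by the isomorphic
  groups gives the last sequence.\<close>

section \<open>Quotients of additive subgroups\<close>

definition add_subgroup :: "'a::ab_group_add set \<Rightarrow> bool" where
  "add_subgroup S \<longleftrightarrow> 0 \<in> S \<and> (\<forall>x\<in>S. \<forall>y\<in>S. x + y \<in> S) \<and> (\<forall>x\<in>S. - x \<in> S)"

lemma add_subgroupI:
  assumes "0 \<in> S" "\<And>x y. x \<in> S \<Longrightarrow> y \<in> S \<Longrightarrow> x + y \<in> S" "\<And>x. x \<in> S \<Longrightarrow> - x \<in> S"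
  shows "add_subgroup S"
  using assms unfolding add_subgroup_def by blast

lemma add_subgroup_zero: "add_subgroup S \<Longrightarrow> 0 \<in> S"
  and add_subgroup_add: "add_subgroup S \<Longrightarrow> x \<in> S \<Longrightarrow> y \<in> S \<Longrightarrow> x + y \<in> S"
  and add_subgroup_uminus: "add_subgroup S \<Longrightarrow> x \<in> S \<Longrightarrow> - x \<in> S"
  unfolding add_subgroup_def by blast+

lemma add_subgroup_diff: "add_subgroup S \<Longrightarrow> x \<in> S \<Longrightarrow> y \<in> S \<Longrightarrow> x - y \<in> S"
  by (metis add_subgroup_add add_subgroup_uminus diff_conv_add_uminus)

definition additive_group :: "'a::ab_group_add set \<Rightarrow> 'a monoid" where
  "additive_group S = \<lparr>carrier = S, mult = (+), one = 0\<rparr>"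

lemma additive_group_simps [simp]:
  "carrier (additive_group S) = S" "mult (additive_group S) = (+)" "one (additive_group S) = 0"
  by (simp_all add: additive_group_def)

lemma comm_group_additive_group: "add_subgroup S \<Longrightarrow> comm_group (additive_group S)"
  unfolding add_subgroup_def
  by (intro comm_groupI) (auto simp: add.assoc add.commute, metis add.right_inverse)

lemma normal_additive_group:
  assumes "add_subgroup T" "T \<subseteq> S" "add_subgroup S"
  shows "T \<lhd> additive_group S"
proof -
  interpret comm_group "additive_group S" using assms(3) by (rule comm_group_additive_group)
  have "inv\<^bsub>additive_group S\<^esub> x = - x" if "x \<in> S" for x
    using that assms(3) by (intro inv_equality) (auto simp: add_subgroup_uminus)
  then have "subgroup T (additive_group S)"
    using assms by (intro subgroupI) (auto simp: add_subgroup_def)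
  then show ?thesis by (rule subgroup_imp_normal)
qed

lemma r_coset_additive_group: "T #>\<^bsub>additive_group S\<^esub> a = (+) a ` T"
  by (auto simp: r_coset_def add.commute)

lemma coset_subset:
  assumes "add_subgroup T" "a - b \<in> T"
  shows "(+) a ` T \<subseteq> (+) b ` T"
proof
  fix x assume "x \<in> (+) a ` T"
  then obtain t where "t \<in> T" "x = b + ((a - b) + t)" by auto
  moreover have "(a - b) + t \<in> T" using assms \<open>t \<in> T\<close> by (simp add: add_subgroup_add)
  ultimately show "x \<in> (+) b ` T" by blast
qed

lemma coset_eq_iff:
  assumes "add_subgroup T"
  shows "(+) a ` T = (+) b ` T \<longleftrightarrow> a - b \<in> T"
proof
  assume "(+) a ` T = (+) b ` T"
  moreover have "a \<in> (+) a ` T" using add_subgroup_zero[OF assms] by force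
  ultimately obtain t where "t \<in> T" "a = b + t" by auto
  then show "a - b \<in> T" by simp
next
  assume "a - b \<in> T"
  moreover have "b - a \<in> T" using add_subgroup_uminus[OF assms \<open>a - b \<in> T\<close>] by simp
  ultimately show "(+) a ` T = (+) b ` T" using coset_subset[OF assms] by blast
qed

lemma coset_zero_iff: "add_subgroup T \<Longrightarrow> (+) a ` T = T \<longleftrightarrow> a \<in> T"
  using coset_eq_iff[of T a 0] by simp

lemma carrier_quotient_additive_group:
  "carrier (additive_group S Mod T) = (\<lambda>a. (+) a ` T) ` S"
  by (auto simp: FactGroup_def RCOSETS_def r_coset_additive_group)

lemma one_quotient_additive_group: "one (additive_group S Mod T) = T"
  by (simp add: FactGroup_def)

lemma mult_quotient_additive_group:
  assumes "add_subgroup T" "T \<subseteq> S" "add_subgroup S" "a \<in> S" "b \<in> S"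
  shows "(+) a ` T \<otimes>\<^bsub>additive_group S Mod T\<^esub> (+) b ` T = (+) (a + b) ` T"
  using normal.rcos_sum[OF normal_additive_group[OF assms(1-3)], of a b] assms(4,5)
  by (simp add: FactGroup_def r_coset_additive_group)

lemma group_quotient_additive_group:
  "add_subgroup T \<Longrightarrow> T \<subseteq> S \<Longrightarrow> add_subgroup S \<Longrightarrow> group (additive_group S Mod T)"
  using normal_additive_group normal.factorgroup_is_group by blast

locale quotient_map =
  fixes S T S' T' :: "'a::ab_group_add set" and \<phi> :: "'a \<Rightarrow> 'a"
  assumes subgroups: "add_subgroup S" "add_subgroup T" "T \<subseteq> S"
      "add_subgroup S'" "add_subgroup T'" "T' \<subseteq> S'"
    and maps_to: "\<And>x. x \<in> S \<Longrightarrow> \<phi> x \<in> S'"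
    and additive: "\<And>x y. x \<in> S \<Longrightarrow> y \<in> S \<Longrightarrow> \<phi> (x + y) = \<phi> x + \<phi> y"
    and maps_subgroup: "\<And>t. t \<in> T \<Longrightarrow> \<phi> t \<in> T'"
begin

definition induced :: "'a set \<Rightarrow> 'a set" where
  "induced X = the_elem ((\<lambda>c. (+) (\<phi> c) ` T') ` X)"

lemma additive_diff: "x \<in> S \<Longrightarrow> y \<in> S \<Longrightarrow> \<phi> (x - y) = \<phi> x - \<phi> y"
  using additive[of "x - y" y] add_subgroup_diff[OF subgroups(1)] by (simp add: algebra_simps)

lemma induced_coset:
  assumes "c \<in> S"
  shows "induced ((+) c ` T) = (+) (\<phi> c) ` T'"
  unfolding induced_def image_image
proof (rule the_elem_image_unique)
  show "T \<noteq> {}" using add_subgroup_zero[OF subgroups(2)] by blast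
  fix t assume "t \<in> T"
  then have "\<phi> (c + t) - \<phi> c \<in> T'"
    using assms subgroups(3) by (simp add: additive maps_subgroup subset_iff)
  then show "(+) (\<phi> (c + t)) ` T' = (+) (\<phi> c) ` T'"
    using coset_eq_iff[OF subgroups(5)] by blast
qed

lemma induced_hom: "induced \<in> hom (additive_group S Mod T) (additive_group S' Mod T')"
proof (rule homI)
  fix X assume "X \<in> carrier (additive_group S Mod T)"
  then obtain a where "a \<in> S" "X = (+) a ` T" by (auto simp: carrier_quotient_additive_group)
  then show "induced X \<in> carrier (additive_group S' Mod T')"
    by (simp add: carrier_quotient_additive_group induced_coset maps_to)
next
  fix X Y assume "X \<in> carrier (additive_group S Mod T)" "Y \<in> carrier (additive_group S Mod T)"
  then obtain a b where ab: "a \<in> S" "b \<in> S" "X = (+) a ` T" "Y = (+) b ` T"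
    by (auto simp: carrier_quotient_additive_group)
  have "induced (X \<otimes>\<^bsub>additive_group S Mod T\<^esub> Y) = (+) (\<phi> a + \<phi> b) ` T'"
    unfolding ab(3,4) mult_quotient_additive_group[OF subgroups(2,3,1) ab(1,2)]
    using ab add_subgroup_add[OF subgroups(1) ab(1,2)] by (simp add: induced_coset additive)
  also have "\<dots> = induced X \<otimes>\<^bsub>additive_group S' Mod T'\<^esub> induced Y"
    unfolding ab(3,4) induced_coset[OF ab(1)] induced_coset[OF ab(2)]
    using mult_quotient_additive_group[OF subgroups(5,6,4)] ab(1,2) maps_to by simp
  finally show "induced (X \<otimes>\<^bsub>additive_group S Mod T\<^esub> Y)
      = induced X \<otimes>\<^bsub>additive_group S' Mod T'\<^esub> induced Y" .
qed

lemma induced_image: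
  "induced ` carrier (additive_group S Mod T) = (\<lambda>c. (+) (\<phi> c) ` T') ` S"
  unfolding carrier_quotient_additive_group image_image by (simp add: induced_coset)

lemma induced_kernel:
  "kernel (additive_group S Mod T) (additive_group S' Mod T') induced
     = (\<lambda>c. (+) c ` T) ` {c \<in> S. \<phi> c \<in> T'}"
proof -
  have "induced ((+) c ` T) = T' \<longleftrightarrow> \<phi> c \<in> T'" if "c \<in> S" for c
    using that coset_zero_iff[OF subgroups(5)] by (simp add: induced_coset)
  then show ?thesis
    unfolding kernel_def carrier_quotient_additive_group one_quotient_additive_group
    by auto
qed

lemma induced_inj_on:
  assumes "\<And>c. c \<in> S \<Longrightarrow> \<phi> c \<in> T' \<Longrightarrow> c \<in> T"
  shows "inj_on induced (carrier (additive_group S Mod T))"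
proof (rule inj_onI)
  fix X Y assume "X \<in> carrier (additive_group S Mod T)" "Y \<in> carrier (additive_group S Mod T)"
    and eq: "induced X = induced Y"
  then obtain a b where ab: "a \<in> S" "b \<in> S" "X = (+) a ` T" "Y = (+) b ` T"
    by (auto simp: carrier_quotient_additive_group)
  then have "\<phi> a - \<phi> b \<in> T'"
    using eq coset_eq_iff[OF subgroups(5)] by (simp add: induced_coset)
  then have "a - b \<in> T"
    using assms ab add_subgroup_diff[OF subgroups(1)] by (simp add: additive_diff)
  then show "X = Y" using ab coset_eq_iff[OF subgroups(2)] by blast
qed

lemma induced_surj:
  assumes "\<And>z. z \<in> S' \<Longrightarrow> \<exists>c\<in>S. \<phi> c - z \<in> T'"
  shows "induced ` carrier (additive_group S Mod T) = carrier (additive_group S' Mod T')"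
proof -
  have "(+) z ` T' \<in> (\<lambda>c. (+) (\<phi> c) ` T') ` S" if "z \<in> S'" for z
  proof -
    obtain c where "c \<in> S" "\<phi> c - z \<in> T'" using assms \<open>z \<in> S'\<close> by blast
    then have "(+) z ` T' = (+) (\<phi> c) ` T'" using coset_eq_iff[OF subgroups(5)] by blast
    then show ?thesis using \<open>c \<in> S\<close> by (rule image_eqI)
  qed
  then have "carrier (additive_group S' Mod T') \<subseteq> (\<lambda>c. (+) (\<phi> c) ` T') ` S"
    unfolding carrier_quotient_additive_group by blast
  then have "carrier (additive_group S' Mod T') \<subseteq> induced ` carrier (additive_group S Mod T)"
    by (simp only: induced_image)
  moreover have "induced ` carrier (additive_group S Mod T) \<subseteq> carrier (additive_group S' Mod T')"
    using hom_in_carrier[OF induced_hom] by blast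
  ultimately show ?thesis by blast
qed

lemma quotient_iso:
  assumes "\<And>c. c \<in> S \<Longrightarrow> \<phi> c \<in> T' \<Longrightarrow> c \<in> T"
    and "\<And>z. z \<in> S' \<Longrightarrow> \<exists>c\<in>S. \<phi> c - z \<in> T'"
  shows "additive_group S Mod T \<cong> additive_group S' Mod T'"
  using induced_hom induced_inj_on[OF assms(1)] induced_surj[OF assms(2)]
  by (intro is_isoI) (simp add: iso_iff)

end

lemma short_exact_sequence_quotients:
  assumes G: "quotient_map S T S' T' \<phi>" and F: "quotient_map S' T' S'' T'' \<psi>"
    and mono: "\<And>b. b \<in> S \<Longrightarrow> \<phi> b \<in> T' \<Longrightarrow> b \<in> T"
    and epi: "\<And>z. z \<in> S'' \<Longrightarrow> \<exists>c\<in>S'. \<psi> c - z \<in> T''"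
    and exact: "\<And>c. c \<in> S' \<Longrightarrow> \<psi> c \<in> T'' \<Longrightarrow> \<exists>b\<in>S. c - \<phi> b \<in> T'"
    and complex: "\<And>b. b \<in> S \<Longrightarrow> \<psi> (\<phi> b) \<in> T''"
  shows "\<exists>f g. short_exact_sequence (additive_group S'' Mod T'') (additive_group S' Mod T')
    (additive_group S Mod T) f g"
proof -
  interpret G: quotient_map S T S' T' \<phi> by (rule G)
  interpret F: quotient_map S' T' S'' T'' \<psi> by (rule F)
  have "kernel (additive_group S' Mod T') (additive_group S'' Mod T'') F.induced
      = G.induced ` carrier (additive_group S Mod T)"
    unfolding F.induced_kernel G.induced_image
  proof (intro equalityI subsetI)
    fix X assume "X \<in> (\<lambda>c. (+) c ` T') ` {c \<in> S'. \<psi> c \<in> T''}"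
    then obtain c where c: "X = (+) c ` T'" "c \<in> S'" "\<psi> c \<in> T''" by blast
    then obtain b where "b \<in> S" "c - \<phi> b \<in> T'" using exact by blast
    then show "X \<in> (\<lambda>b. (+) (\<phi> b) ` T') ` S"
      using c(1) coset_eq_iff[OF G.subgroups(5)] by blast
  next
    fix X assume "X \<in> (\<lambda>b. (+) (\<phi> b) ` T') ` S"
    then show "X \<in> (\<lambda>c. (+) c ` T') ` {c \<in> S'. \<psi> c \<in> T''}"
      using G.maps_to complex by blast
  qed
  moreover have "G.induced \<in> mon (additive_group S Mod T) (additive_group S' Mod T')"
    using G.induced_hom G.induced_inj_on[OF mono] by (simp add: mon_def)
  moreover have "F.induced \<in> epi (additive_group S' Mod T') (additive_group S'' Mod T'')"
    using F.induced_hom F.induced_surj[OF epi] by (simp add: epi_def)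
  moreover have "group (additive_group S Mod T)" "group (additive_group S' Mod T')"
    "group (additive_group S'' Mod T'')"
    using G.subgroups F.subgroups by (simp_all add: group_quotient_additive_group)
  ultimately have "short_exact_sequence (additive_group S'' Mod T'') (additive_group S' Mod T')
      (additive_group S Mod T) F.induced G.induced"
    by (auto simp: short_exact_sequence_iff group_hom_def group_hom_axioms_def mon_def epi_def)
  then show ?thesis by blast
qed

section \<open>The simplicial boundary\<close>

definition supp :: "('a \<Rightarrow> 'g::zero) \<Rightarrow> 'a set" where
  "supp c = {\<sigma>. c \<sigma> \<noteq> 0}"

definition finite_chain :: "('v set \<Rightarrow> 'g::zero) \<Rightarrow> bool" where
  "finite_chain c \<longleftrightarrow> finite (supp c) \<and> (\<forall>\<sigma>\<in>supp c. finite \<sigma>)"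

definition alt_sign :: "nat \<Rightarrow> 'g::ab_group_add \<Rightarrow> 'g" where
  "alt_sign k x = (if even k then x else - x)"

definition rank_below :: "'v::linorder set \<Rightarrow> 'v \<Rightarrow> nat" where
  "rank_below \<tau> v = card {u\<in>\<tau>. u < v}"

lemma alt_sign_simps:
  "alt_sign k (x + y) = alt_sign k x + alt_sign k y"
  "alt_sign k (- x) = - alt_sign k x"
  "alt_sign k (sum f A) = (\<Sum>i\<in>A. alt_sign k (f i))"
  "alt_sign k (alt_sign j x) = alt_sign (k + j) x"
  "alt_sign (Suc k) x = - alt_sign k x"
  by (simp_all add: alt_sign_def sum_negf)

lemma supp_add: "supp (c + d) \<subseteq> supp c \<union> supp (d :: 'a \<Rightarrow> 'g::monoid_add)"
  by (auto simp: supp_def)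

lemma finite_chain_uminus: "finite_chain c \<Longrightarrow> finite_chain (- c :: 'v set \<Rightarrow> 'g::group_add)"
  by (simp add: finite_chain_def supp_def)

lemma bd_eq_sum:
  assumes "\<tau> \<noteq> {}" "finite V" "\<Union>(supp c) \<subseteq> V"
  shows "bd c \<tau> = (\<Sum>v\<in>V - \<tau>. alt_sign (rank_below \<tau> v) (c (insert v \<tau>)))"
proof -
  have "{v. v \<notin> \<tau> \<and> c (insert v \<tau>) \<noteq> 0} \<subseteq> V - \<tau>"
    using assms(3) by (auto simp: supp_def)
  then show ?thesis
    using assms(1,2) unfolding bd_def alt_sign_def rank_below_def
    by (simp, intro sum.mono_neutral_left) auto
qed

lemma bd_add:
  assumes c: "finite_chain c" and d: "finite_chain d"
  shows "bd (c + d) = bd c + bd d"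
proof
  fix \<tau>
  show "bd (c + d) \<tau> = (bd c + bd d) \<tau>"
  proof (cases "\<tau> = {}")
    case True
    then show ?thesis by (simp add: bd_def)
  next
    case False
    define V where "V = \<Union>(supp c) \<union> \<Union>(supp d)"
    have V: "finite V" "\<Union>(supp c) \<subseteq> V" "\<Union>(supp d) \<subseteq> V" "\<Union>(supp (c + d)) \<subseteq> V"
      using c d supp_add[of c d] by (auto simp: V_def finite_chain_def)
    show ?thesis
      using bd_eq_sum[OF False V(1,4)] bd_eq_sum[OF False V(1,2)] bd_eq_sum[OF False V(1,3)]
      by (simp add: alt_sign_simps sum.distrib)
  qed
qed

lemma bd_uminus:
  assumes c: "finite_chain c"
  shows "bd (- c) = - bd c"
proof
  fix \<tau>
  show "bd (- c) \<tau> = (- bd c) \<tau>"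
  proof (cases "\<tau> = {}")
    case True
    then show ?thesis by (simp add: bd_def)
  next
    case False
    have V: "finite (\<Union>(supp c))" "\<Union>(supp (- c)) \<subseteq> \<Union>(supp c)"
      using c by (auto simp: finite_chain_def supp_def)
    show ?thesis
      using bd_eq_sum[OF False V] bd_eq_sum[OF False V(1) order_refl]
      by (simp add: alt_sign_simps sum_negf)
  qed
qed

lemma bd_zero [simp]: "bd 0 = 0"
  by (simp add: bd_def fun_eq_iff)

lemma bd_nonzero_coface:
  assumes "bd c \<tau> \<noteq> 0"
  obtains v where "v \<notin> \<tau>" "insert v \<tau> \<in> supp c"
proof -
  have "{v. v \<notin> \<tau> \<and> c (insert v \<tau>) \<noteq> 0} \<noteq> {}"
  proof
    assume none: "{v. v \<notin> \<tau> \<and> c (insert v \<tau>) \<noteq> 0} = {}"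
    have "bd c \<tau> = 0" unfolding bd_def none by simp
    then show False using assms by simp
  qed
  then show ?thesis using that by (auto simp: supp_def)
qed

lemma finite_chain_bd:
  assumes c: "finite_chain c"
  shows "finite_chain (bd c)" "\<Union>(supp (bd c)) \<subseteq> \<Union>(supp c)"
proof -
  have faces: "\<exists>\<sigma>\<in>supp c. \<exists>v\<in>\<sigma>. \<tau> = \<sigma> - {v} \<and> \<tau> \<subseteq> \<sigma>" if "\<tau> \<in> supp (bd c)" for \<tau>
  proof -
    have "bd c \<tau> \<noteq> 0" using that by (simp add: supp_def)
    then obtain v where "v \<notin> \<tau>" "insert v \<tau> \<in> supp c" by (rule bd_nonzero_coface)
    then show ?thesis by (intro bexI[of _ "insert v \<tau>"]) auto
  qed
  then have "supp (bd c) \<subseteq> (\<lambda>(\<sigma>, v). \<sigma> - {v}) ` (SIGMA \<sigma>:supp c. \<sigma>)"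
    by (fastforce simp: image_iff)
  moreover have "finite (SIGMA \<sigma>:supp c. \<sigma>)" using c by (auto simp: finite_chain_def)
  ultimately have "finite (supp (bd c))" by (metis finite_surj)
  moreover have "finite \<tau>" if "\<tau> \<in> supp (bd c)" for \<tau>
    using faces[OF that] c by (auto simp: finite_chain_def intro: finite_subset)
  ultimately show "finite_chain (bd c)" by (simp add: finite_chain_def)
  show "\<Union>(supp (bd c)) \<subseteq> \<Union>(supp c)" using faces by blast
qed

lemma rank_below_insert_less:
  assumes "finite \<rho>" "w \<notin> \<rho>" "w < v"
  shows "rank_below (insert w \<rho>) v = Suc (rank_below \<rho> v)"
proof -
  have "{u \<in> insert w \<rho>. u < v} = insert w {u \<in> \<rho>. u < v}" using assms by auto
  then show ?thesis unfolding rank_below_def using assms by simp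
qed

lemma rank_below_insert_ge: "\<not> v < w \<Longrightarrow> rank_below (insert v \<rho>) w = rank_below \<rho> w"
  unfolding rank_below_def by (metis (lifting) insert_iff mem_Collect_eq)

text \<open>The term of \<open>bd (bd c) \<rho>\<close> that reinserts \<open>w\<close> and then \<open>v\<close> cancels the one that
  reinserts \<open>v\<close> and then \<open>w\<close>: for \<open>w < v\<close> the rank of \<open>v\<close> is shifted by one in the first
  and that of \<open>w\<close> is not shifted in the second.\<close>
lemma bd_bd:
  assumes c: "finite_chain c"
  shows "bd (bd c) = 0"
proof
  fix \<rho>
  show "bd (bd c) \<rho> = 0 \<rho>"
  proof (cases "\<rho> = {}")
    case True
    then show ?thesis by (simp add: bd_def)
  next
    case False
    define V where "V = \<Union>(supp c)"
    have fV: "finite V" using c by (auto simp: V_def finite_chain_def)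
    define f where "f w v = alt_sign (rank_below \<rho> w + rank_below (insert w \<rho>) v)
      (c (insert v (insert w \<rho>)))" for w v
    define P where "P = (SIGMA w:V - \<rho>. V - insert w \<rho>)"
    define P1 where "P1 = {p \<in> P. fst p < snd p}"
    have "bd (bd c) \<rho> = (\<Sum>w\<in>V - \<rho>. alt_sign (rank_below \<rho> w) (bd c (insert w \<rho>)))"
      using finite_chain_bd(2)[OF c] False fV by (intro bd_eq_sum) (auto simp: V_def)
    also have "\<dots> = (\<Sum>w\<in>V - \<rho>. \<Sum>v\<in>V - insert w \<rho>. f w v)"
      using fV by (simp add: bd_eq_sum V_def f_def alt_sign_simps)
    also have "\<dots> = (\<Sum>(w, v)\<in>P. f w v)"
      unfolding P_def using fV by (intro sum.Sigma) auto
    also have "\<dots> = (\<Sum>(w, v)\<in>P1. f w v) + (\<Sum>(w, v)\<in>prod.swap ` P1. f w v)"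
    proof -
      have "P = P1 \<union> prod.swap ` P1" "P1 \<inter> prod.swap ` P1 = {}"
        by (auto simp: P1_def P_def neq_iff image_iff)
      moreover have "finite P" using fV by (simp add: P_def)
      ultimately show ?thesis by (simp add: sum.union_disjoint)
    qed
    also have "(\<Sum>(w, v)\<in>prod.swap ` P1. f w v) = (\<Sum>(w, v)\<in>P1. - f w v)"
    proof -
      have anti: "f v w = - f w v" if "(w, v) \<in> P1" for w v
      proof (cases "finite \<rho>")
        case True
        have "w < v" "w \<notin> \<rho>" using that by (auto simp: P1_def P_def)
        then show ?thesis
          using rank_below_insert_less[OF True] rank_below_insert_ge[of v w \<rho>]
          by (simp add: f_def insert_commute alt_sign_simps add.commute)
      next
        case False
        then have "c (insert v (insert w \<rho>)) = 0"
          using c by (auto simp: finite_chain_def supp_def)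
        then show ?thesis by (simp add: f_def insert_commute alt_sign_def)
      qed
      have "(\<Sum>(w, v)\<in>prod.swap ` P1. f w v) = (\<Sum>p\<in>P1. (\<lambda>(w, v). f w v) (prod.swap p))"
        by (subst sum.reindex) (auto simp: inj_on_def)
      also have "\<dots> = (\<Sum>(w, v)\<in>P1. - f w v)"
        using anti by (intro sum.cong) auto
      finally show ?thesis .
    qed
    finally show ?thesis by (simp add: sum_negf case_prod_unfold)
  qed
qed

section \<open>Embedded homology as a quotient of additive subgroups\<close>

lemma chains_finite_chain: "c \<in> chains X n \<Longrightarrow> finite_chain c"
  unfolding chains_def finite_chain_def supp_def by (auto intro: card_ge_0_finite)

lemma zero_chains [simp]: "0 \<in> chains X n"
  by (simp add: chains_def)

lemma add_subgroup_chains: "add_subgroup (chains X n :: ('v set \<Rightarrow> 'g::ab_group_add) set)"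
proof (rule add_subgroupI)
  fix x y :: "'v set \<Rightarrow> 'g" assume "x \<in> chains X n" "y \<in> chains X n"
  moreover have "supp (x + y) \<subseteq> supp x \<union> supp y" by (rule supp_add)
  ultimately show "x + y \<in> chains X n"
    unfolding chains_def supp_def by (auto intro: finite_subset)
qed (simp_all add: chains_def)

lemma chains_mono: "X \<subseteq> Y \<Longrightarrow> chains X n \<subseteq> chains Y n"
  unfolding chains_def by blast

lemma chains_empty: "chains {} n = {0}"
  unfolding chains_def by (auto simp: fun_eq_iff)

lemma Inf_finite_chain: "c \<in> Inf X n \<Longrightarrow> finite_chain c"
  unfolding Inf_def using chains_finite_chain by blast

lemma Inf_mono: "X \<subseteq> Y \<Longrightarrow> Inf X n \<subseteq> Inf Y n"
  unfolding Inf_def using chains_mono by blast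

lemma bd_add_Inf: "c \<in> Inf X n \<Longrightarrow> d \<in> Inf Y k \<Longrightarrow> bd (c + d) = bd c + bd d"
  by (intro bd_add Inf_finite_chain)

lemma bd_diff_Inf:
  assumes "c \<in> Inf X n" "d \<in> Inf Y k"
  shows "bd (c - d) = bd c - bd d"
proof -
  have "bd (c + - d) = bd c + bd (- d)"
    using assms by (intro bd_add finite_chain_uminus Inf_finite_chain)
  then show ?thesis using bd_uminus[OF Inf_finite_chain[OF assms(2)]] by simp
qed

lemma bd_bd_Inf: "c \<in> Inf X n \<Longrightarrow> bd (bd c) = 0"
  by (intro bd_bd Inf_finite_chain)

lemma zero_Inf [simp]: "0 \<in> Inf X n"
  by (simp add: Inf_def)

lemma add_subgroup_Inf: "add_subgroup (Inf X n :: ('v::linorder set \<Rightarrow> 'g::ab_group_add) set)"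
proof (rule add_subgroupI)
  show "0 \<in> Inf X n" by simp
  fix x y :: "'v set \<Rightarrow> 'g" assume xy: "x \<in> Inf X n" "y \<in> Inf X n"
  have "bd (x + y) = bd x + bd y" using xy by (rule bd_add_Inf)
  then show "x + y \<in> Inf X n"
    using xy add_subgroup_add[OF add_subgroup_chains] by (auto simp: Inf_def)
next
  fix x :: "'v set \<Rightarrow> 'g" assume x: "x \<in> Inf X n"
  have "bd (- x) = - bd x" using x by (simp add: bd_uminus Inf_finite_chain)
  then show "- x \<in> Inf X n"
    using x add_subgroup_uminus[OF add_subgroup_chains] by (auto simp: Inf_def)
qed

lemma Inf_empty: "Inf {} n = {0}"
  using chains_empty by (auto simp: Inf_def)

lemma bd_Inf:
  assumes "d \<in> Inf X (Suc n)"
  shows "bd d \<in> Inf X n"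
  using assms bd_bd_Inf[OF assms] by (simp add: Inf_def)

lemma Inf_add: "x \<in> Inf X n \<Longrightarrow> y \<in> Inf X n \<Longrightarrow> x + y \<in> Inf X n"
  and Inf_uminus: "x \<in> Inf X n \<Longrightarrow> - x \<in> Inf X n"
  and Inf_diff: "x \<in> Inf X n \<Longrightarrow> y \<in> Inf X n \<Longrightarrow> x - y \<in> Inf X n"
  by (simp_all add: add_subgroup_add add_subgroup_uminus add_subgroup_diff add_subgroup_Inf)

lemma rel_bounds_eq: "rel_bounds B A n = {bd d + a | d a. d \<in> Inf B (Suc n) \<and> a \<in> Inf A n}"
  by (simp add: rel_bounds_def plus_fun_def)

lemma rel_cycles_empty: "rel_cycles B {} n = {c \<in> Inf B n. n = 0 \<or> bd c = 0}"
  by (simp add: rel_cycles_def Inf_empty)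

lemma rel_bounds_empty: "rel_bounds B {} n = bd ` Inf B (Suc n)"
  by (auto simp: rel_bounds_eq Inf_empty)

lemma rel_cycles_Suc: "c \<in> rel_cycles B A (Suc p) \<longleftrightarrow> c \<in> Inf B (Suc p) \<and> bd c \<in> Inf A p"
  by (simp add: rel_cycles_def)

lemma Inf_subset_rel_bounds: "Inf A n \<subseteq> rel_bounds B A n"
proof
  fix a assume "a \<in> Inf A n"
  then show "a \<in> rel_bounds B A n"
    unfolding rel_bounds_eq by (intro CollectI exI[of _ 0] exI[of _ a]) simp
qed

lemma zero_rel_bounds [simp]: "0 \<in> rel_bounds B A n"
  using Inf_subset_rel_bounds zero_Inf by blast

lemma rel_cycles_mono: "A \<subseteq> A' \<Longrightarrow> rel_cycles B A n \<subseteq> rel_cycles B A' n"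
  unfolding rel_cycles_def using Inf_mono by blast

lemma rel_bounds_mono: "A \<subseteq> A' \<Longrightarrow> rel_bounds B A n \<subseteq> rel_bounds B A' n"
  unfolding rel_bounds_eq using Inf_mono by blast

lemma add_subgroup_rel_cycles:
  "add_subgroup (rel_cycles B A n :: ('v::linorder set \<Rightarrow> 'g::ab_group_add) set)"
proof (rule add_subgroupI)
  show "0 \<in> rel_cycles B A n" by (simp add: rel_cycles_def)
  fix x y :: "'v set \<Rightarrow> 'g" assume xy: "x \<in> rel_cycles B A n" "y \<in> rel_cycles B A n"
  then have "x \<in> Inf B n" "y \<in> Inf B n" by (simp_all add: rel_cycles_def)
  then have "bd (x + y) = bd x + bd y" by (rule bd_add_Inf)
  then show "x + y \<in> rel_cycles B A n"
    using xy by (auto simp: rel_cycles_def Inf_add)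
next
  fix x :: "'v set \<Rightarrow> 'g" assume x: "x \<in> rel_cycles B A n"
  then have "bd (- x) = - bd x" by (auto simp: rel_cycles_def bd_uminus Inf_finite_chain)
  then show "- x \<in> rel_cycles B A n"
    using x by (auto simp: rel_cycles_def Inf_uminus)
qed

lemma add_subgroup_rel_bounds:
  "add_subgroup (rel_bounds B A n :: ('v::linorder set \<Rightarrow> 'g::ab_group_add) set)"
proof (rule add_subgroupI)
  show "0 \<in> rel_bounds B A n" by simp
  fix x y :: "'v set \<Rightarrow> 'g" assume "x \<in> rel_bounds B A n" "y \<in> rel_bounds B A n"
  then obtain d a d' a' where xy: "x = bd d + a" "y = bd d' + a'"
    "d \<in> Inf B (Suc n)" "d' \<in> Inf B (Suc n)" "a \<in> Inf A n" "a' \<in> Inf A n"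
    unfolding rel_bounds_eq by blast
  have "bd (d + d') = bd d + bd d'" by (rule bd_add_Inf[OF xy(3,4)])
  then have "x + y = bd (d + d') + (a + a')" using xy(1,2) by (simp add: algebra_simps)
  then show "x + y \<in> rel_bounds B A n"
    using xy unfolding rel_bounds_eq by (blast intro: Inf_add)
next
  fix x :: "'v set \<Rightarrow> 'g" assume "x \<in> rel_bounds B A n"
  then obtain d a where x: "x = bd d + a" "d \<in> Inf B (Suc n)" "a \<in> Inf A n"
    unfolding rel_bounds_eq by blast
  then have "- x = bd (- d) + (- a)"
    by (simp add: bd_uminus Inf_finite_chain)
  then show "- x \<in> rel_bounds B A n"
    using x unfolding rel_bounds_eq by (blast intro: Inf_uminus)
qed

lemma rel_bounds_subset_rel_cycles:
  assumes "A \<subseteq> B"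
  shows "rel_bounds B A n \<subseteq> rel_cycles B A n"
proof
  fix x assume "x \<in> rel_bounds B A n"
  then obtain d a where x: "x = bd d + a" "d \<in> Inf B (Suc n)" "a \<in> Inf A n"
    unfolding rel_bounds_eq by blast
  have "a \<in> Inf B n" using x(3) Inf_mono[OF assms] by blast
  then have "x \<in> Inf B n" using x bd_Inf Inf_add by blast
  moreover have "bd x = bd a"
    using bd_add_Inf[OF bd_Inf[OF x(2)] x(3)] bd_bd_Inf[OF x(2)] x(1) by simp
  moreover have "n = 0 \<or> bd a \<in> Inf A (n - 1)"
    using x(3) bd_Inf[of a A "n - 1"] by (cases n) auto
  ultimately show "x \<in> rel_cycles B A n" by (simp add: rel_cycles_def)
qed

lemma cycle_group_eq: "cycle_group B A n = additive_group (rel_cycles B A n)"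
  unfolding cycle_group_def additive_group_def by (simp add: plus_fun_def zero_fun_def fun_eq_iff)

lemma rel_emb_homology_eq:
  "rel_emb_homology B A n = additive_group (rel_cycles B A n) Mod rel_bounds B A n"
  by (simp add: rel_emb_homology_def cycle_group_eq)

lemma group_rel_emb_homology: "A \<subseteq> B \<Longrightarrow> group (rel_emb_homology B A n)"
  unfolding rel_emb_homology_eq
  by (intro group_quotient_additive_group add_subgroup_rel_cycles add_subgroup_rel_bounds
      rel_bounds_subset_rel_cycles)

lemma quotient_map_inclusion:
  assumes "A \<subseteq> A'" "A' \<subseteq> B"
  shows "quotient_map (rel_cycles B A n) (rel_bounds B A n) (rel_cycles B A' n) (rel_bounds B A' n)
    (id :: ('v::linorder set \<Rightarrow> 'g::ab_group_add) \<Rightarrow> _)"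
proof unfold_locales
  fix x :: "'v set \<Rightarrow> 'g" assume "x \<in> rel_cycles B A n"
  then show "id x \<in> rel_cycles B A' n" using rel_cycles_mono[OF assms(1), of B n] by auto
next
  fix t :: "'v set \<Rightarrow> 'g" assume "t \<in> rel_bounds B A n"
  then show "id t \<in> rel_bounds B A' n" using rel_bounds_mono[OF assms(1), of B n] by auto
qed (use assms in \<open>auto simp: add_subgroup_rel_cycles add_subgroup_rel_bounds
      intro!: rel_bounds_subset_rel_cycles\<close>)

lemma quotient_map_boundary:
  assumes "A \<subseteq> B"
  shows "quotient_map (rel_cycles B A (Suc p)) (rel_bounds B A (Suc p)) (rel_cycles A {} p)
    (rel_bounds A {} p) (bd :: ('v::linorder set \<Rightarrow> 'g::ab_group_add) \<Rightarrow> _)"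
proof unfold_locales
  fix x :: "'v set \<Rightarrow> 'g" assume "x \<in> rel_cycles B A (Suc p)"
  then show "bd x \<in> rel_cycles A {} p"
    by (simp add: rel_cycles_Suc rel_cycles_empty bd_bd_Inf[of x B "Suc p"])
next
  fix x y :: "'v set \<Rightarrow> 'g" assume "x \<in> rel_cycles B A (Suc p)" "y \<in> rel_cycles B A (Suc p)"
  then have "x \<in> Inf B (Suc p)" "y \<in> Inf B (Suc p)" by (simp_all add: rel_cycles_Suc)
  then show "bd (x + y) = bd x + bd y" by (rule bd_add_Inf)
next
  fix t :: "'v set \<Rightarrow> 'g" assume "t \<in> rel_bounds B A (Suc p)"
  then obtain d a where t: "t = bd d + a" "d \<in> Inf B (Suc (Suc p))" "a \<in> Inf A (Suc p)"
    unfolding rel_bounds_eq by blast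
  then have "bd t = bd a"
    using bd_add_Inf[OF bd_Inf[OF t(2)] t(3)] bd_bd_Inf[OF t(2)] by simp
  then show "bd t \<in> rel_bounds A {} p" using t(3) by (simp add: rel_bounds_empty)
qed (use assms in \<open>auto simp: add_subgroup_rel_cycles add_subgroup_rel_bounds
      intro!: rel_bounds_subset_rel_cycles\<close>)

section \<open>A hypergraph with vanishing homology between two others\<close>

lemma trivial_homology_cycle_is_boundary:
  fixes H :: "'v::linorder set set" and c :: "'v set \<Rightarrow> 'g::ab_group_add"
  assumes "trivial_group (emb_homology H n :: ('v set \<Rightarrow> 'g) set monoid)"
    and "c \<in> Inf H n" "n = 0 \<or> bd c = 0"
  shows "\<exists>d\<in>Inf H (Suc n). c = bd d"
proof -
  have "c \<in> rel_cycles H {} n" using assms(2,3) by (simp add: rel_cycles_empty)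
  then have "(+) c ` rel_bounds H {} n \<in> carrier (emb_homology H n)"
    by (simp add: emb_homology_def rel_emb_homology_eq carrier_quotient_additive_group)
  then have "(+) c ` rel_bounds H {} n = rel_bounds H {} n"
    using assms(1)
    by (simp add: trivial_group_def emb_homology_def rel_emb_homology_eq one_quotient_additive_group)
  then have "c \<in> rel_bounds H {} n" using coset_zero_iff[OF add_subgroup_rel_bounds] by blast
  then show ?thesis by (auto simp: rel_bounds_empty)
qed

lemma cycle_in_rel_bounds_is_boundary:
  fixes c :: "'v::linorder set \<Rightarrow> 'g::ab_group_add"
  assumes "A \<subseteq> H" "H \<subseteq> B" "trivial_group (emb_homology H n :: ('v set \<Rightarrow> 'g) set monoid)"
    and "c \<in> rel_cycles B {} n" "c \<in> rel_bounds B A n"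
  shows "c \<in> rel_bounds B {} n"
proof -
  obtain e a where ea: "c = bd e + a" "e \<in> Inf B (Suc n)" "a \<in> Inf A n"
    using assms(5) unfolding rel_bounds_eq by blast
  have "bd c = bd a"
    using bd_add_Inf[OF bd_Inf[OF ea(2)] ea(3)] bd_bd_Inf[OF ea(2)] ea(1) by simp
  then have "n = 0 \<or> bd a = 0" using assms(4) by (simp add: rel_cycles_empty)
  moreover have "a \<in> Inf H n" using ea(3) Inf_mono[OF assms(1)] by blast
  ultimately obtain e' where e': "e' \<in> Inf H (Suc n)" "a = bd e'"
    using trivial_homology_cycle_is_boundary[OF assms(3)] by blast
  then have "e' \<in> Inf B (Suc n)" using Inf_mono[OF assms(2)] by blast
  then have "c = bd (e + e')" "e + e' \<in> Inf B (Suc n)"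
    using ea e' by (simp_all add: bd_add_Inf[OF ea(2)] Inf_add)
  then show ?thesis by (auto simp: rel_bounds_empty)
qed

lemma rel_emb_homology_iso_emb_homology:
  fixes H B :: "'v::linorder set set"
  assumes "H \<subseteq> B"
    and "trivial_group (emb_homology H p :: ('v set \<Rightarrow> 'g::ab_group_add) set monoid)"
    and "trivial_group (emb_homology H (Suc p) :: ('v set \<Rightarrow> 'g) set monoid)"
  shows "(rel_emb_homology B H (Suc p) :: ('v set \<Rightarrow> 'g) set monoid)
    \<cong> (emb_homology B (Suc p) :: ('v set \<Rightarrow> 'g) set monoid)"
proof -
  have "group (emb_homology B (Suc p) :: ('v set \<Rightarrow> 'g) set monoid)"
    unfolding emb_homology_def by (rule group_rel_emb_homology) simp
  moreover have "(emb_homology B (Suc p) :: ('v set \<Rightarrow> 'g) set monoid)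
      \<cong> (rel_emb_homology B H (Suc p) :: ('v set \<Rightarrow> 'g) set monoid)"
    unfolding emb_homology_def rel_emb_homology_eq
  proof (rule quotient_map.quotient_iso[OF quotient_map_inclusion[OF empty_subsetI assms(1)]])
    fix c :: "'v set \<Rightarrow> 'g" assume "c \<in> rel_cycles B {} (Suc p)" "id c \<in> rel_bounds B H (Suc p)"
    then show "c \<in> rel_bounds B {} (Suc p)"
      using cycle_in_rel_bounds_is_boundary[OF order_refl assms(1,3)] by simp
  next
    fix z :: "'v set \<Rightarrow> 'g" assume "z \<in> rel_cycles B H (Suc p)"
    then have z: "z \<in> Inf B (Suc p)" "bd z \<in> Inf H p" by (simp_all add: rel_cycles_Suc)
    obtain d where d: "d \<in> Inf H (Suc p)" "bd z = bd d"
      using trivial_homology_cycle_is_boundary[OF assms(2) z(2)] bd_bd_Inf[OF z(1)] by auto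
    have dB: "d \<in> Inf B (Suc p)" using d(1) Inf_mono[OF assms(1)] by blast
    have "z - d \<in> rel_cycles B {} (Suc p)"
      using d(2) by (simp add: rel_cycles_empty Inf_diff[OF z(1) dB] bd_diff_Inf[OF z(1) dB])
    moreover have "- d \<in> rel_bounds B H (Suc p)"
      using Inf_subset_rel_bounds Inf_uminus[OF d(1)] by blast
    then have "id (z - d) - z \<in> rel_bounds B H (Suc p)" by simp
    ultimately show "\<exists>c\<in>rel_cycles B {} (Suc p). id c - z \<in> rel_bounds B H (Suc p)" by blast
  qed
  ultimately show ?thesis by (rule group.iso_sym)
qed

lemma lower_cycle_is_boundary:
  fixes z :: "'v::linorder set \<Rightarrow> 'g::ab_group_add"
  assumes "A \<subseteq> H" "trivial_group (emb_homology H p :: ('v set \<Rightarrow> 'g) set monoid)"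
    and "z \<in> rel_cycles A {} p"
  obtains d where "d \<in> rel_cycles H A (Suc p)" "z = bd d"
proof -
  have "z \<in> Inf H p" "p = 0 \<or> bd z = 0"
    using assms(3) Inf_mono[OF assms(1)] by (auto simp: rel_cycles_empty)
  then obtain d where "d \<in> Inf H (Suc p)" "z = bd d"
    using trivial_homology_cycle_is_boundary[OF assms(2)] by blast
  moreover have "bd d \<in> Inf A p" using assms(3) \<open>z = bd d\<close> by (simp add: rel_cycles_empty)
  ultimately show ?thesis using that by (simp add: rel_cycles_Suc)
qed

lemma rel_emb_homology_iso_boundary:
  fixes A H :: "'v::linorder set set"
  assumes "A \<subseteq> H"
    and "trivial_group (emb_homology H p :: ('v set \<Rightarrow> 'g::ab_group_add) set monoid)"
    and "trivial_group (emb_homology H (Suc p) :: ('v set \<Rightarrow> 'g) set monoid)"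
  shows "(rel_emb_homology H A (Suc p) :: ('v set \<Rightarrow> 'g) set monoid)
    \<cong> (emb_homology A p :: ('v set \<Rightarrow> 'g) set monoid)"
  unfolding emb_homology_def rel_emb_homology_eq
proof (rule quotient_map.quotient_iso[OF quotient_map_boundary[OF assms(1)]])
  fix c :: "'v set \<Rightarrow> 'g" assume c: "c \<in> rel_cycles H A (Suc p)" "bd c \<in> rel_bounds A {} p"
  then obtain e where e: "e \<in> Inf A (Suc p)" "bd c = bd e" by (auto simp: rel_bounds_empty)
  have cH: "c \<in> Inf H (Suc p)" using c(1) by (simp add: rel_cycles_Suc)
  have eH: "e \<in> Inf H (Suc p)" using e(1) Inf_mono[OF assms(1)] by blast
  obtain f where f: "f \<in> Inf H (Suc (Suc p))" "c - e = bd f"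
    using trivial_homology_cycle_is_boundary[OF assms(3) Inf_diff[OF cH eH]]
      bd_diff_Inf[OF cH eH] e(2) by auto
  then have "c = bd f + e" by (simp add: algebra_simps)
  then show "c \<in> rel_bounds H A (Suc p)" using f(1) e(1) unfolding rel_bounds_eq by blast
next
  fix z :: "'v set \<Rightarrow> 'g" assume "z \<in> rel_cycles A {} p"
  then obtain d where "d \<in> rel_cycles H A (Suc p)" "z = bd d"
    using lower_cycle_is_boundary[OF assms(1,2)] by blast
  moreover have "bd d - z \<in> rel_bounds A {} p" using \<open>z = bd d\<close> by simp
  ultimately show "\<exists>c\<in>rel_cycles H A (Suc p). bd c - z \<in> rel_bounds A {} p" by blast
qed

lemma short_exact_sequence_rel_emb_homology:
  fixes A H B :: "'v::linorder set set"
  assumes "A \<subseteq> H" "H \<subseteq> B"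
    and "trivial_group (emb_homology H p :: ('v set \<Rightarrow> 'g::ab_group_add) set monoid)"
    and "trivial_group (emb_homology H (Suc p) :: ('v set \<Rightarrow> 'g) set monoid)"
  shows "\<exists>f g. short_exact_sequence (emb_homology A p :: ('v set \<Rightarrow> 'g) set monoid)
    (rel_emb_homology B A (Suc p)) (emb_homology B (Suc p)) f g"
  unfolding emb_homology_def rel_emb_homology_eq
proof (rule short_exact_sequence_quotients[OF quotient_map_inclusion quotient_map_boundary])
  fix b :: "'v set \<Rightarrow> 'g" assume "b \<in> rel_cycles B {} (Suc p)" "id b \<in> rel_bounds B A (Suc p)"
  then show "b \<in> rel_bounds B {} (Suc p)"
    using cycle_in_rel_bounds_is_boundary[OF assms(1,2,4)] by simp
next
  fix z :: "'v set \<Rightarrow> 'g" assume "z \<in> rel_cycles A {} p"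
  then obtain d where "d \<in> rel_cycles H A (Suc p)" "z = bd d"
    using lower_cycle_is_boundary[OF assms(1,3)] by blast
  moreover have "rel_cycles H A (Suc p) \<subseteq> rel_cycles B A (Suc p)"
    using Inf_mono[OF assms(2)] unfolding rel_cycles_def by blast
  moreover have "bd d - z \<in> rel_bounds A {} p" using \<open>z = bd d\<close> by simp
  ultimately show "\<exists>c\<in>rel_cycles B A (Suc p). bd c - z \<in> rel_bounds A {} p" by blast
next
  fix c :: "'v set \<Rightarrow> 'g" assume c: "c \<in> rel_cycles B A (Suc p)" "bd c \<in> rel_bounds A {} p"
  then obtain e where e: "e \<in> Inf A (Suc p)" "bd c = bd e" by (auto simp: rel_bounds_empty)
  have cB: "c \<in> Inf B (Suc p)" using c(1) by (simp add: rel_cycles_Suc)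
  have eB: "e \<in> Inf B (Suc p)" using e(1) Inf_mono assms(1,2) by blast
  have "c - e \<in> rel_cycles B {} (Suc p)"
    using e(2) by (simp add: rel_cycles_empty Inf_diff[OF cB eB] bd_diff_Inf[OF cB eB])
  moreover have "e \<in> rel_bounds B A (Suc p)"
    using e(1) Inf_subset_rel_bounds by blast
  then have "c - id (c - e) \<in> rel_bounds B A (Suc p)" by simp
  ultimately show "\<exists>b\<in>rel_cycles B {} (Suc p). c - id b \<in> rel_bounds B A (Suc p)" by blast
next
  fix b :: "'v set \<Rightarrow> 'g" assume "b \<in> rel_cycles B {} (Suc p)"
  then show "bd (id b) \<in> rel_bounds A {} p" by (simp add: rel_cycles_empty)
qed (use assms(1,2) in auto)

lemma short_exact_sequence_iso_ends:
  assumes "short_exact_sequence A B C f g" "A \<cong> A'" "C' \<cong> C" "group A'" "group C'"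
  shows "\<exists>f' g'. short_exact_sequence A' B C' f' g'"
proof -
  obtain \<beta> \<gamma> where \<beta>: "\<beta> \<in> iso A A'" and \<gamma>: "\<gamma> \<in> iso C' C"
    using assms(2,3) unfolding is_iso_def by blast
  have f: "f \<in> epi B A" and g: "g \<in> mon C B" and ex: "exact_seq ([A, B, C], [f, g])"
    using assms(1) short_exact_sequence_iff by blast+
  then have "group A" "group B" "f \<in> hom B A" "kernel B A f = g ` carrier C"
    by (auto simp: group_hom_def)
  have "kernel B A' (\<beta> \<circ> f) = kernel B A f"
  proof -
    have "\<beta> (f x) = \<one>\<^bsub>A'\<^esub> \<longleftrightarrow> f x = \<one>\<^bsub>A\<^esub>" if "x \<in> carrier B" for x
      using \<beta> \<open>group A\<close> assms(4) hom_in_carrier[OF \<open>f \<in> hom B A\<close> that]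
      by (metis group.is_monoid hom_one iso_iff monoid.one_closed inj_on_def)
    then show ?thesis by (auto simp: kernel_def)
  qed
  moreover have "(g \<circ> \<gamma>) ` carrier C' = g ` carrier C"
    using \<gamma> unfolding iso_iff by (metis image_comp)
  moreover have "g \<circ> \<gamma> \<in> hom C' B" "\<beta> \<circ> f \<in> hom B A'"
    using \<gamma> g \<beta> \<open>f \<in> hom B A\<close> by (auto intro: hom_compose simp: iso_def mon_def)
  ultimately have "exact_seq ([A', B, C'], [\<beta> \<circ> f, g \<circ> \<gamma>])"
    using \<open>kernel B A f = g ` carrier C\<close> \<open>group B\<close> assms(4,5)
    by (simp add: group_hom_def group_hom_axioms_def)
  moreover have "\<beta> \<circ> f \<in> epi B A'" using epi_compose[OF f] \<beta> iso_iff_mon_epi by blast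
  moreover have "g \<circ> \<gamma> \<in> mon C' B" using mon_compose[OF _ g] \<gamma> iso_iff_mon_epi by blast
  ultimately show ?thesis using short_exact_sequence_iff by blast
qed

lemma homology_sequences_of_acyclic_middle:
  fixes L H K :: "'v::linorder set set"
  assumes "L \<subseteq> H" "H \<subseteq> K" "0 < n"
    and "trivial_group (emb_homology H (n - 1) :: ('v set \<Rightarrow> 'g::ab_group_add) set monoid)"
    and "trivial_group (emb_homology H n :: ('v set \<Rightarrow> 'g) set monoid)"
  shows "(rel_emb_homology K H n :: ('v set \<Rightarrow> 'g) set monoid)
        \<cong> (emb_homology K n :: ('v set \<Rightarrow> 'g) set monoid)
   \<and> (rel_emb_homology H L n :: ('v set \<Rightarrow> 'g) set monoid)
        \<cong> (emb_homology L (n - 1) :: ('v set \<Rightarrow> 'g) set monoid)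
   \<and> (\<exists>f g. short_exact_sequence (emb_homology L (n - 1) :: ('v set \<Rightarrow> 'g) set monoid)
        (rel_emb_homology K L n) (emb_homology K n) f g)
   \<and> (\<exists>f g. short_exact_sequence (rel_emb_homology H L n :: ('v set \<Rightarrow> 'g) set monoid)
        (rel_emb_homology K L n) (rel_emb_homology K H n) f g)"
proof -
  obtain p where n: "n = Suc p" using assms(3) gr0_implies_Suc by blast
  have acyclic: "trivial_group (emb_homology H p :: ('v set \<Rightarrow> 'g) set monoid)"
    "trivial_group (emb_homology H (Suc p) :: ('v set \<Rightarrow> 'g) set monoid)"
    using assms(4,5) by (simp_all add: n)
  note i = rel_emb_homology_iso_emb_homology[OF assms(2) acyclic]
  note ii = rel_emb_homology_iso_boundary[OF assms(1) acyclic]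
  note iii = short_exact_sequence_rel_emb_homology[OF assms(1,2) acyclic]
  then obtain f g where "short_exact_sequence (emb_homology L p :: ('v set \<Rightarrow> 'g) set monoid)
      (rel_emb_homology K L (Suc p)) (emb_homology K (Suc p)) f g"
    by blast
  note iv = short_exact_sequence_iso_ends[OF this group.iso_sym[OF group_rel_emb_homology ii] i
      group_rel_emb_homology group_rel_emb_homology]
  show ?thesis using i ii iii iv assms(1,2) by (simp add: n)
qed

theorem mainTheorem6:
  fixes H :: "'v::linorder set set" and l m :: nat
  assumes "is_hypergraph H" and "l + 1 \<le> m"
    and "\<forall>n. l \<le> n \<and> n \<le> m \<longrightarrow>
           carrier (emb_homology H n :: ('v set \<Rightarrow> 'g::ab_group_add) set monoid)
             = {\<one>\<^bsub>emb_homology H n :: ('v set \<Rightarrow> 'g) set monoid\<^esub>}"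
  shows "\<forall>n. l + 1 \<le> n \<and> n \<le> m \<longrightarrow>
     (rel_emb_homology (assoc_complex H) H n :: ('v set \<Rightarrow> 'g) set monoid)
        \<cong> (emb_homology (assoc_complex H) n :: ('v set \<Rightarrow> 'g) set monoid)
   \<and> (rel_emb_homology H (lower_complex H) n :: ('v set \<Rightarrow> 'g) set monoid)
        \<cong> (emb_homology (lower_complex H) (n - 1) :: ('v set \<Rightarrow> 'g) set monoid)
   \<and> (\<exists>f g. short_exact_sequence
        (emb_homology (lower_complex H) (n - 1) :: ('v set \<Rightarrow> 'g) set monoid)
        (rel_emb_homology (assoc_complex H) (lower_complex H) n)
        (emb_homology (assoc_complex H) n) f g)
   \<and> (\<exists>f g. short_exact_sequence
        (rel_emb_homology H (lower_complex H) n :: ('v set \<Rightarrow> 'g) set monoid)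
        (rel_emb_homology (assoc_complex H) (lower_complex H) n)
        (rel_emb_homology (assoc_complex H) H n) f g)"
proof -
  have "lower_complex H \<subseteq> H" by (auto simp: lower_complex_def)
  moreover have "H \<subseteq> assoc_complex H"
    using assms(1) by (auto simp: assoc_complex_def is_hypergraph_def)
  moreover have "trivial_group (emb_homology H k :: ('v set \<Rightarrow> 'g) set monoid)"
    if "l \<le> k" "k \<le> m" for k
    using assms(3) that group_rel_emb_homology[of "{}" H k]
    by (simp add: trivial_group_def emb_homology_def)
  ultimately show ?thesis
    by (intro allI impI homology_sequences_of_acyclic_middle) auto
qed

end
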